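(* Let $X$ be an instance set, $f:X\to\mathcal{F}$ a feature map with $\mathcal{F}$ finite, $\mathcal{A}$ a set of algorithms with performance measure $\mathrm{cost}:\mathcal{A}\times X\to\mathbb{R}$ such that the class $\{x\mapsto\mathrm{cost}(A,x):A\in\mathcal{A}\}$ has pseudo-dimension $d$, and $\mathcal{G}$ a set of maps $g:\mathcal{F}\to\mathcal{A}$. Then the class $\{x\mapsto \mathrm{cost}(g(f(x)),x): g\in\mathcal{G}\}$ has pseudo-dimension at most $|\mathcal{F}|\,d$.
   Context: Pseudo-dimension: a finite set $\{x_1,\dots,x_m\}$ is shattered by a class $\mathcal{H}$ of real functions if there exist reals $r_i$ such that for every $T\subseteq\{1,\dots,m\}$ some $h\in\mathcal{H}$ has $h(x_i)>r_i\iff i\in T$; the pseudo-dimension is the largest size of a shattered set. *)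

theory Defs
  imports "HOL-Analysis.Analysis" "HOL-Library.Extended_Nat"
begin

definition pshatters :: "('a \<Rightarrow> real) set \<Rightarrow> 'a set \<Rightarrow> bool" where
  "pshatters H S \<longleftrightarrow> finite S \<and>
     (\<exists>r :: 'a \<Rightarrow> real. \<forall>T \<subseteq> S. \<exists>h \<in> H. \<forall>x \<in> S. (h x > r x \<longleftrightarrow> x \<in> T))"

definition pdim :: "'a set \<Rightarrow> ('a \<Rightarrow> real) set \<Rightarrow> enat" where
  "pdim X H = Sup {enat (card S) | S. S \<subseteq> X \<and> pshatters H S}"

end

theory Submission
  imports Defs
begin

text \<open>Split a set shattered by the composed class into the fibres of the feature map.
On the fibre over a feature u every composed function agrees with the single cost function
of the algorithm g u, so each fibre is shattered by the cost class and has at most d elements;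
there are at most |Fs| fibres.\<close>

lemma pshatters_restrict:
  assumes "pshatters H S" and "S' \<subseteq> S"
    and "\<forall>h \<in> H. \<exists>h' \<in> H'. \<forall>x \<in> S'. h' x = h x"
  shows "pshatters H' S'"
proof -
  from assms(1) obtain r where r: "\<forall>T \<subseteq> S. \<exists>h \<in> H. \<forall>x \<in> S. (h x > r x \<longleftrightarrow> x \<in> T)"
    and "finite S"
    unfolding pshatters_def by blast
  have "\<exists>h' \<in> H'. \<forall>x \<in> S'. (h' x > r x \<longleftrightarrow> x \<in> T)" if "T \<subseteq> S'" for T
  proof -
    from r \<open>T \<subseteq> S'\<close> \<open>S' \<subseteq> S\<close> obtain h where "h \<in> H" and h: "\<forall>x \<in> S. (h x > r x \<longleftrightarrow> x \<in> T)"
      by blast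
    with assms(3) obtain h' where "h' \<in> H'" and "\<forall>x \<in> S'. h' x = h x" by blast
    with h \<open>S' \<subseteq> S\<close> show ?thesis by (metis subsetD)
  qed
  with \<open>finite S\<close> \<open>S' \<subseteq> S\<close> show ?thesis
    unfolding pshatters_def by (blast intro: finite_subset)
qed

lemma card_le_pdim:
  assumes "S \<subseteq> X" and "pshatters H S"
  shows "enat (card S) \<le> pdim X H"
  unfolding pdim_def using assms by (blast intro: Sup_upper)

lemma pdim_le_enatI:
  assumes "\<And>S. S \<subseteq> X \<Longrightarrow> pshatters H S \<Longrightarrow> card S \<le> n"
  shows "pdim X H \<le> enat n"
  unfolding pdim_def using assms by (auto intro!: Sup_least)

lemma card_le_card_mult_fibre_bound:
  assumes "finite Fs" and "f ` S \<subseteq> Fs"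
    and "\<And>u. u \<in> Fs \<Longrightarrow> card {x \<in> S. f x = u} \<le> d"
  shows "card S \<le> card Fs * d"
proof -
  have "S = (\<Union>u\<in>Fs. {x \<in> S. f x = u})" using assms(2) by auto
  then have "card S \<le> (\<Sum>u\<in>Fs. card {x \<in> S. f x = u})"
    by (metis card_UN_le assms(1))
  also have "\<dots> \<le> (\<Sum>u\<in>Fs. d)" by (rule sum_mono) (rule assms(3))
  also have "\<dots> = card Fs * d" by simp
  finally show ?thesis .
qed

theorem mainTheorem5:
  fixes X :: "'x set" and f :: "'x \<Rightarrow> 'f" and Fs :: "'f set"
    and Algs :: "'a set" and cost :: "'a \<Rightarrow> 'x \<Rightarrow> real"
    and G :: "('f \<Rightarrow> 'a) set" and d :: nat
  assumes "finite Fs"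
    and "\<forall>x \<in> X. f x \<in> Fs"
    and "\<forall>g \<in> G. \<forall>u \<in> Fs. g u \<in> Algs"
    and "pdim X ((\<lambda>A x. cost A x) ` Algs) = enat d"
  shows "pdim X ((\<lambda>g x. cost (g (f x)) x) ` G) \<le> enat (card Fs * d)"
proof (rule pdim_le_enatI)
  fix S assume "S \<subseteq> X" and shattered: "pshatters ((\<lambda>g x. cost (g (f x)) x) ` G) S"
  show "card S \<le> card Fs * d"
  proof (rule card_le_card_mult_fibre_bound[OF assms(1)])
    show "f ` S \<subseteq> Fs" using \<open>S \<subseteq> X\<close> assms(2) by auto
    fix u assume "u \<in> Fs"
    have "pshatters ((\<lambda>A x. cost A x) ` Algs) {x \<in> S. f x = u}"
      by (rule pshatters_restrict[OF shattered]) (use \<open>u \<in> Fs\<close> assms(3) in auto)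
    moreover have "{x \<in> S. f x = u} \<subseteq> X" using \<open>S \<subseteq> X\<close> by auto
    ultimately have "enat (card {x \<in> S. f x = u}) \<le> enat d"
      using card_le_pdim assms(4) by metis
    then show "card {x \<in> S. f x = u} \<le> d" by simp
  qed
qed

end
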